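(* Let $p_0\approx0.7336$ be the unique solution in $(0,1)$ of the equation $4\ln(1+p)-3p=0$. For any $p\in(p_0,1)$ and any \[ \lambda\in\left(0,\ \frac{\frac4p\log(1+p)-3}{-4p\log(1+p)+2p^2}\right), \] there exists $f\in\mathcal{U}_m(\lambda)$ (with pole at $p$) such that the third Taylor coefficient $a_3(f)$ of $f$ in $|z|<p$ satisfies \[ |a_3(f)|>\frac{1}{p^2}\left(1+\lambda p^2+\lambda^2p^4\right). \]
   Context: For $\lambda\in(0,1)$ and $p\in(0,1)$, $\mathcal{U}_m(\lambda)$ denotes the family of functions $f$ meromorphic in $\mathbb{D}=\{z:|z|<1\}$ with a pole at the point $z=p$, having a Taylor expansion $f(z)=z+\sum_{k=2}^\infty a_k z^k$ for $|z|<p$, and satisfying $\left|\frac{z}{f(z)}-z\left(\frac{z}{f(z)}\right)'-1\right|<\lambda$ for every $z\in\mathbb{D}$. Here $a_3(f)$ denotes the coefficient $a_3$ in this expansion, and $\log$ is the natural logarithm. *)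

theory Defs
  imports "HOL-Complex_Analysis.Complex_Analysis"
begin

text \<open>The class U_m(lambda) with pole at p: f meromorphic in the unit disc with its
(only) pole at p, normalised f(0)=0, f'(0)=1 (Taylor expansion z + a_2 z^2 + ... in |z|<p),
and the function z/f(z) (with its removable singularities at 0 and p filled in) is
holomorphic in the disc and satisfies |z/f(z) - z (z/f(z))' - 1| < lambda there.\<close>

definition U_m :: "real \<Rightarrow> real \<Rightarrow> (complex \<Rightarrow> complex) set" where
  "U_m lam p = {f.
     f holomorphic_on (ball 0 1 - {complex_of_real p}) \<and>
     is_pole f (complex_of_real p) \<and>
     f 0 = 0 \<and> deriv f 0 = 1 \<and>
     (\<exists>g. g holomorphic_on ball 0 1 \<and>
          (\<forall>z\<in>ball 0 1 - {0, complex_of_real p}. g z = z / f z) \<and>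
          (\<forall>z\<in>ball 0 1. cmod (g z - z * deriv g z - 1) < lam))}"

definition taylor_coeff :: "(complex \<Rightarrow> complex) \<Rightarrow> nat \<Rightarrow> complex" where
  "taylor_coeff f n = (deriv ^^ n) f 0 / of_nat (fact n)"

end

theory Submission
  imports Defs
begin

(*
  Let F be holomorphic in the unit disc with F 0 = 0 and |F'| <= 1, and put
  g z = 1 + b z + lam z F z with b chosen so that g p = 0. Then g - z g' - 1 = - lam z^2 F', and
  since z F z is 2-Lipschitz, g has no other zero once |b| > 2 lam; so z / g lies in U_m(lam),
  and its third coefficient is b^2 - lam F'(0). For F z = z this is exactly the bound
  (1 + lam p^2 + lam^2 p^4) / p^2. Taking instead for F the primitive of the disc automorphism
  (z + a) / (1 + a z), which is z at a = 1, the derivative of b^2 - lam a with respect to a at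
  a = 1 is negative precisely when lam is below the stated threshold, so some a < 1 beats the bound.
*)

lemma taylor_coeff_3_id_divide:
  assumes "open S" "0 \<in> S" "g holomorphic_on S" "\<And>z. z \<in> S \<Longrightarrow> g z \<noteq> 0" "g 0 = 1"
  shows "taylor_coeff (\<lambda>z. z / g z) 3 = (deriv g 0)\<^sup>2 - (deriv ^^ 2) g 0 / 2"
proof -
  define f where "f = (\<lambda>z. z / g z)"
  define d where "d = (\<lambda>n. (deriv ^^ n) f 0)"
  define e where "e = (\<lambda>n. (deriv ^^ n) g 0)"
  have "f holomorphic_on S"
    unfolding f_def using assms(3,4) by (intro holomorphic_intros) auto
  then have leibniz: "(deriv ^^ n) (\<lambda>z. z) 0 = (\<Sum>i = 0..n. of_nat (n choose i) * d i * e (n - i))" for n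
  proof -
    have "(deriv ^^ n) (\<lambda>z. f z * g z) 0 = (deriv ^^ n) (\<lambda>z. z) 0"
    proof (rule higher_deriv_cong_ev)
      show "\<forall>\<^sub>F z in nhds 0. f z * g z = z"
        using eventually_nhds_in_open[OF assms(1,2)] by eventually_elim (use assms(4) in \<open>simp add: f_def\<close>)
    qed simp
    then show ?thesis
      using higher_deriv_mult[OF \<open>f holomorphic_on S\<close> assms(3,1,2)] by (simp add: d_def e_def)
  qed
  have "d 0 = 0" "e 0 = 1" by (simp_all add: d_def e_def f_def assms(5))
  have "d 1 = 1"
    using leibniz[of 1] \<open>d 0 = 0\<close> \<open>e 0 = 1\<close> by simp
  have "d 2 = - 2 * e 1"
  proof -
    have "2 * e 1 + d 2 = 0"
      using leibniz[of 2] \<open>d 0 = 0\<close> \<open>e 0 = 1\<close> \<open>d 1 = 1\<close> by (simp add: numeral_2_eq_2)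
    then show ?thesis unfolding add_eq_0_iff by simp
  qed
  have "d 3 = 6 * (e 1)\<^sup>2 - 3 * e 2"
  proof -
    have "3 * e 2 - 6 * (e 1)\<^sup>2 + d 3 = 0"
      using leibniz[of 3] \<open>d 0 = 0\<close> \<open>e 0 = 1\<close> \<open>d 1 = 1\<close> \<open>d 2 = - 2 * e 1\<close>
      by (simp add: numeral_3_eq_3 numeral_2_eq_2 power2_eq_square algebra_simps)
    then show ?thesis unfolding add_eq_0_iff by simp
  qed
  then show ?thesis
    by (simp add: taylor_coeff_def d_def e_def f_def fact_numeral)
qed

lemma id_divide_in_U_m:
  fixes g :: "complex \<Rightarrow> complex" and p lam :: real
  assumes "0 < p" "p < 1" "g holomorphic_on ball 0 1" "g 0 = 1" "g p = 0"
    and "\<And>z. z \<in> ball 0 1 - {of_real p} \<Longrightarrow> g z \<noteq> 0"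
    and "\<And>z. z \<in> ball 0 1 \<Longrightarrow> cmod (g z - z * deriv g z - 1) < lam"
  shows "(\<lambda>z. z / g z) \<in> U_m lam p"
  unfolding U_m_def
proof (intro CollectI conjI exI[of _ g] ballI)
  have p_in: "complex_of_real p \<in> ball 0 1" using assms(1,2) by simp
  show "(\<lambda>z. z / g z) holomorphic_on ball 0 1 - {complex_of_real p}"
    using assms(6) by (intro holomorphic_intros holomorphic_on_subset[OF assms(3)]) auto
  have "is_pole (\<lambda>z. z / g z) (complex_of_real p)"
  proof (rule is_pole_divide)
    have "isCont g p"
      using assms(3) p_in by (intro field_differentiable_imp_continuous_at holomorphic_on_imp_differentiable_at) auto
    moreover have "\<forall>\<^sub>F z in at (complex_of_real p). g z \<noteq> 0"
      using eventually_at_in_open[OF open_ball p_in] by eventually_elim (use assms(6) in auto)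
    ultimately show "filterlim g (at 0) (at (complex_of_real p))"
      using assms(5) by (intro filterlim_atI) (auto simp: isCont_def)
  qed (use assms(1) in auto)
  then show "is_pole (\<lambda>z. z / g z) (complex_of_real p)" .
  show "0 / g 0 = 0" by simp
  have "((\<lambda>z. z / g z) has_field_derivative (1 * g 0 - 0 * deriv g 0) / (g 0 * g 0)) (at 0)"
    using assms(3,4) by (auto intro!: derivative_eq_intros holomorphic_derivI[OF assms(3)])
  then show "deriv (\<lambda>z. z / g z) 0 = 1"
    using assms(4) by (simp add: DERIV_imp_deriv)
qed (use assms(3,6,7) in auto)

lemma norm_le_norm_if_norm_deriv_le_1:
  assumes "F holomorphic_on ball 0 1" "F 0 = 0" "\<And>z. z \<in> ball 0 1 \<Longrightarrow> cmod (deriv F z) \<le> 1"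
    and "z \<in> ball 0 1"
  shows "cmod (F z) \<le> cmod z"
proof -
  have "cmod (F z - F 0) \<le> 1 * cmod (z - 0)"
    using assms by (intro field_differentiable_bound[where S="ball 0 1" and f'="deriv F"])
      (auto intro: holomorphic_derivI)
  then show ?thesis using assms(2) by simp
qed

lemma lipschitz_id_mult_if_norm_deriv_le_1:
  assumes "F holomorphic_on ball 0 1" "F 0 = 0" "\<And>z. z \<in> ball 0 1 \<Longrightarrow> cmod (deriv F z) \<le> 1"
    and "z \<in> ball 0 1" "w \<in> ball 0 1"
  shows "cmod (z * F z - w * F w) \<le> 2 * cmod (z - w)"
proof (rule field_differentiable_bound[where S="ball 0 1" and f'="\<lambda>u. F u + u * deriv F u"])
  fix u :: complex assume u: "u \<in> ball 0 1"
  show "((\<lambda>z. z * F z) has_field_derivative F u + u * deriv F u) (at u within ball 0 1)"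
    using assms(1) u by (auto intro!: derivative_eq_intros holomorphic_derivI)
  have "cmod (F u + u * deriv F u) \<le> cmod (F u) + cmod u * cmod (deriv F u)"
    by (metis norm_mult norm_triangle_ineq)
  also have "\<dots> \<le> 1 + 1 * 1"
    using norm_le_norm_if_norm_deriv_le_1[OF assms(1-3) u] assms(3)[OF u] u
    by (intro add_mono mult_mono) auto
  finally show "cmod (F u + u * deriv F u) \<le> 2" by simp
qed (use assms in auto)

lemma id_divide_perturbation_in_U_m:
  fixes F :: "complex \<Rightarrow> complex" and b :: complex and p lam :: real
  assumes "F holomorphic_on ball 0 1" "F 0 = 0" "\<And>z. z \<in> ball 0 1 \<Longrightarrow> cmod (deriv F z) \<le> 1"
    and "0 < p" "p < 1" "0 < lam" "1 + b * p + lam * p * F p = 0" "2 * lam < cmod b"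
  defines "g \<equiv> \<lambda>z. 1 + b * z + of_real lam * z * F z"
  shows "(\<lambda>z. z / g z) \<in> U_m lam p"
    and "taylor_coeff (\<lambda>z. z / g z) 3 = b\<^sup>2 - lam * deriv F 0"
proof -
  have g_holo: "g holomorphic_on ball 0 1"
    unfolding g_def using assms(1) by (intro holomorphic_intros)
  have g_deriv: "deriv g z = b + lam * (F z + z * deriv F z)" if "z \<in> ball 0 1" for z
    unfolding g_def using assms(1) that
    by (intro DERIV_imp_deriv) (auto intro!: derivative_eq_intros holomorphic_derivI simp: algebra_simps)
  have "g p = 0" using assms(7) by (simp add: g_def algebra_simps)
  have g_nonzero: "g z \<noteq> 0" if z: "z \<in> ball 0 1 - {of_real p}" for z
  proof
    assume "g z = 0"
    moreover have "g z - g p = b * (z - p) + lam * (z * F z - p * F p)"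
      by (simp add: g_def algebra_simps)
    ultimately have "cmod (b * (z - p)) = cmod (lam * (z * F z - p * F p))"
      using \<open>g p = 0\<close> by (metis add_eq_0_iff diff_zero norm_minus_cancel)
    then have "cmod b * cmod (z - p) = lam * cmod (z * F z - p * F p)"
      using assms(6) by (simp add: norm_mult)
    also have "\<dots> \<le> lam * (2 * cmod (z - p))"
      using z assms(4,5,6) by (intro mult_left_mono lipschitz_id_mult_if_norm_deriv_le_1[OF assms(1-3)]) auto
    also have "\<dots> < cmod b * cmod (z - p)"
      using z assms(8) by simp
    finally show False by simp
  qed
  show "(\<lambda>z. z / g z) \<in> U_m lam p"
  proof (rule id_divide_in_U_m[OF assms(4,5) g_holo _ _ g_nonzero])
    show "g 0 = 1" "g p = 0" using \<open>g p = 0\<close> by (simp_all add: g_def)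
    fix z :: complex assume z: "z \<in> ball 0 1"
    have "g z - z * deriv g z - 1 = - (lam * z\<^sup>2 * deriv F z)"
      using g_deriv[OF z] by (simp add: g_def algebra_simps power2_eq_square)
    then have "cmod (g z - z * deriv g z - 1) = lam * (cmod z)\<^sup>2 * cmod (deriv F z)"
      using assms(6) by (simp add: norm_mult norm_power)
    also have "\<dots> \<le> lam * (cmod z)\<^sup>2"
      using assms(3)[OF z] assms(6) by (simp add: mult_left_le)
    also have "\<dots> < lam"
      using z assms(6) by (simp add: abs_square_less_1)
    finally show "cmod (g z - z * deriv g z - 1) < lam" .
  qed
  have "(deriv ^^ 2) g 0 = deriv (\<lambda>z. b + lam * (F z + z * deriv F z)) 0"
    unfolding numeral_2_eq_2 funpow.simps o_def
    by (intro deriv_cong_ev eventually_mono[OF eventually_nhds_in_open[of "ball 0 1"]])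
      (auto simp: g_deriv)
  also have "\<dots> = 2 * lam * deriv F 0"
    using holomorphic_deriv[OF assms(1) open_ball] assms(1)
    by (intro DERIV_imp_deriv) (auto intro!: derivative_eq_intros holomorphic_derivI)
  finally have "(deriv ^^ 2) g 0 = 2 * lam * deriv F 0" .
  moreover have "deriv g 0 = b" using g_deriv[of 0] assms(2) by simp
  moreover have "g 0 = 1" by (simp add: g_def)
  ultimately show "taylor_coeff (\<lambda>z. z / g z) 3 = b\<^sup>2 - lam * deriv F 0"
    using taylor_coeff_3_id_divide[of "ball 0 1 - {of_real p}" g] g_nonzero assms(4,5)
      holomorphic_on_subset[OF g_holo] by auto
qed

definition moebius_primitive :: "real \<Rightarrow> complex \<Rightarrow> complex" where
  "moebius_primitive a z = z / a - of_real ((1 - a\<^sup>2) / a\<^sup>2) * Ln (1 + a * z)"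

definition moebius_primitive_real :: "real \<Rightarrow> real \<Rightarrow> real" where
  "moebius_primitive_real a x = x / a - (1 - a\<^sup>2) / a\<^sup>2 * ln (1 + a * x)"

lemma Re_one_plus_real_mult_pos:
  assumes "\<bar>a\<bar> < 1" "z \<in> ball 0 1"
  shows "0 < Re (1 + of_real a * z)"
proof -
  have "\<bar>a * Re z\<bar> \<le> 1 * cmod z"
    unfolding abs_mult using assms(1) abs_Re_le_cmod by (intro mult_mono) auto
  then show ?thesis using assms(2) by (simp add: abs_le_iff)
qed

lemma moebius_primitive_has_field_derivative:
  assumes "a \<noteq> 0" "\<bar>a\<bar> < 1" "z \<in> ball 0 1"
  shows "(moebius_primitive a has_field_derivative Moebius_function 0 (- of_real a) z) (at z)"
proof -
  have "0 < Re (1 + of_real a * z)"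
    by (rule Re_one_plus_real_mult_pos[OF assms(2,3)])
  then have "1 + of_real a * z \<notin> \<real>\<^sub>\<le>\<^sub>0" "1 + of_real a * z \<noteq> 0"
    by (auto simp only: complex_nonpos_Reals_iff zero_complex.sel)
  then show ?thesis
    unfolding moebius_primitive_def[abs_def] Moebius_function_simple
    using assms(1)
    by (auto intro!: derivative_eq_intros) (simp add: divide_simps, simp add: algebra_simps eval_nat_numeral)
qed

lemma moebius_primitive_holomorphic:
  assumes "a \<noteq> 0" "\<bar>a\<bar> < 1"
  shows "moebius_primitive a holomorphic_on ball 0 1"
  unfolding holomorphic_on_open[OF open_ball]
  using moebius_primitive_has_field_derivative[OF assms] by blast

lemma moebius_primitive_deriv:
  assumes "a \<noteq> 0" "\<bar>a\<bar> < 1" "z \<in> ball 0 1"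
  shows "deriv (moebius_primitive a) z = Moebius_function 0 (- of_real a) z"
  by (rule DERIV_imp_deriv[OF moebius_primitive_has_field_derivative[OF assms]])

lemma norm_deriv_moebius_primitive_le_1:
  assumes "a \<noteq> 0" "\<bar>a\<bar> < 1" "z \<in> ball 0 1"
  shows "cmod (deriv (moebius_primitive a) z) \<le> 1"
  using Moebius_function_norm_lt_1[of "- of_real a" z 0] assms
  by (simp add: moebius_primitive_deriv less_imp_le)

lemma deriv_moebius_primitive_0:
  assumes "a \<noteq> 0" "\<bar>a\<bar> < 1"
  shows "deriv (moebius_primitive a) 0 = a"
  using assms by (simp add: moebius_primitive_deriv Moebius_function_of_zero)

lemma moebius_primitive_zero: "moebius_primitive a 0 = 0"
  by (simp add: moebius_primitive_def)

lemma moebius_primitive_of_real: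
  assumes "0 < 1 + a * x"
  shows "moebius_primitive a (of_real x) = of_real (moebius_primitive_real a x)"
proof -
  have "Ln (1 + of_real a * of_real x) = of_real (ln (1 + a * x))"
    using Ln_of_real[OF assms] by simp
  then show ?thesis by (simp add: moebius_primitive_def moebius_primitive_real_def)
qed

lemma ln_one_plus_ge_Pade:
  fixes x :: real
  assumes "0 \<le> x"
  shows "2 * x / (2 + x) \<le> ln (1 + x)"
proof -
  define h where "h = (\<lambda>x::real. ln (1 + x) - 2 * x / (2 + x))"
  have "h 0 \<le> h x"
  proof (rule DERIV_nonneg_imp_increasing_open[OF assms])
    fix y :: real assume y: "0 < y" "y < x"
    have "(h has_real_derivative 1 / (1 + y) - 4 / (2 + y)\<^sup>2) (at y)"
      unfolding h_def using y
      by (auto intro!: derivative_eq_intros simp: field_simps power2_eq_square)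
    moreover have "4 / (2 + y)\<^sup>2 \<le> 1 / (1 + y)"
      using y by (simp add: divide_simps power2_eq_square algebra_simps)
    ultimately show "\<exists>d. (h has_real_derivative d) (at y) \<and> 0 \<le> d" by force
  qed (auto simp: h_def intro!: continuous_intros)
  then show ?thesis by (simp add: h_def)
qed

lemma moebius_primitive_real_ge:
  assumes "0 < a" "a \<le> 1" "0 \<le> x"
  shows "a * x \<le> moebius_primitive_real a x"
proof -
  have "(1 - a\<^sup>2) / a\<^sup>2 * ln (1 + a * x) \<le> (1 - a\<^sup>2) / a\<^sup>2 * (a * x)"
    using assms by (intro mult_left_mono ln_add_one_self_le_self) (auto simp: power_le_one)
  also have "\<dots> = x / a - a * x"
    using assms(1) by (simp add: field_simps power2_eq_square)
  finally show ?thesis by (simp add: moebius_primitive_real_def)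
qed

lemma moebius_primitive_real_has_derivative_at_1:
  assumes "-1 < x"
  shows "((\<lambda>a. moebius_primitive_real a x) has_real_derivative 2 * ln (1 + x) - x) (at 1)"
  unfolding moebius_primitive_real_def using assms
  by (auto intro!: derivative_eq_intros simp: power2_eq_square)

lemma admissible_lambda_bounds:
  fixes p lam :: real
  assumes "0 < p" "p < 1" "0 < lam"
    and "lam < ((4 / p) * ln (1 + p) - 3) / (- 4 * p * ln (1 + p) + 2 * p^2)"
  shows "2 * (1 + lam * p\<^sup>2) * (2 * ln (1 + p) - p) < p" and "lam < 1 / 2"
proof -
  define L where "L = ln (1 + p)"
  have L_ge: "2 * p / (2 + p) \<le> L"
    unfolding L_def using ln_one_plus_ge_Pade assms(1) by simp
  moreover have "p / 2 < 2 * p / (2 + p)"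
    using assms(1,2) by (simp add: field_simps)
  ultimately have "0 < 2 * L - p" by linarith
  moreover have "- 4 * p * L + 2 * p\<^sup>2 = - 2 * p * (2 * L - p)"
    by (simp add: algebra_simps power2_eq_square)
  ultimately have "- 4 * p * L + 2 * p\<^sup>2 < 0"
    using assms(1) by (simp add: mult_pos_pos)
  then have "(4 / p) * L - 3 < lam * (- 4 * p * L + 2 * p\<^sup>2)"
    using assms(4)[folded L_def] by (simp add: neg_less_divide_eq)
  then have "p * ((4 / p) * L - 3) < p * (lam * (- 4 * p * L + 2 * p\<^sup>2))"
    using assms(1) by simp
  then show key: "2 * (1 + lam * p\<^sup>2) * (2 * L - p) < p"
    using assms(1) by (simp add: algebra_simps power2_eq_square)
  show "lam < 1 / 2"
  proof (rule ccontr)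
    assume "\<not> lam < 1 / 2"
    then have "1 / 2 * p\<^sup>2 \<le> lam * p\<^sup>2"
      by (intro mult_right_mono) auto
    then have "2 * (1 + 1 / 2 * p\<^sup>2) * (2 * L - p) \<le> 2 * (1 + lam * p\<^sup>2) * (2 * L - p)"
      using \<open>0 < 2 * L - p\<close> by (intro mult_right_mono) auto
    with key have "(4 + 2 * p\<^sup>2) * L < 3 * p + p ^ 3"
      by (simp add: algebra_simps power2_eq_square power3_eq_cube)
    moreover have "(4 + 2 * p\<^sup>2) * (2 * p / (2 + p)) \<le> (4 + 2 * p\<^sup>2) * L"
      using L_ge by (intro mult_left_mono) auto
    moreover have "3 * p + p ^ 3 \<le> (4 + 2 * p\<^sup>2) * (2 * p / (2 + p))"
    proof -
      have "0 \<le> p * (1 - p) * ((1 - p) + p\<^sup>2 + 1)"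
        using assms(1,2) by (intro mult_nonneg_nonneg add_nonneg_nonneg) auto
      then show ?thesis
        using assms(1) by (simp add: field_simps power2_eq_square power3_eq_cube)
    qed
    ultimately show False by linarith
  qed
qed

lemma third_coefficient_gain:
  fixes p lam :: real
  assumes "0 < p" "0 < lam" "2 * (1 + lam * p\<^sup>2) * (2 * ln (1 + p) - p) < p"
  obtains a where "0 < a" "a < 1"
    and "(1 / p^2) * (1 + lam * p^2 + lam^2 * p^4)
           < ((1 + lam * p * moebius_primitive_real a p) / p)\<^sup>2 - lam * a"
proof -
  define c where "c = (\<lambda>a. ((1 + lam * p * moebius_primitive_real a p) / p)\<^sup>2 - lam * a)"
  have "moebius_primitive_real 1 p = p" by (simp add: moebius_primitive_real_def)
  then have "(c has_real_derivative
      2 * ((1 + lam * p * p) / p) * (lam * p * (2 * ln (1 + p) - p) / p) - lam) (at 1)"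
    unfolding c_def using assms(1)
    by (auto intro!: derivative_eq_intros moebius_primitive_real_has_derivative_at_1)
  moreover have "2 * ((1 + lam * p * p) / p) * (lam * p * (2 * ln (1 + p) - p) / p) - lam
      = lam / p * (2 * (1 + lam * p\<^sup>2) * (2 * ln (1 + p) - p) - p)"
    using assms(1) by (simp add: field_simps power2_eq_square)
  moreover have "\<dots> < 0"
    using assms by (intro mult_pos_neg) auto
  ultimately obtain d where "0 < d" and d: "\<And>h. 0 < h \<Longrightarrow> h < d \<Longrightarrow> c 1 < c (1 - h)"
    using has_real_derivative_neg_dec_left[of c _ 1 UNIV] by auto
  show ?thesis
  proof
    show "0 < 1 - min d 1 / 2" "1 - min d 1 / 2 < 1" using \<open>0 < d\<close> by auto
    have "(1 / p^2) * (1 + lam * p^2 + lam^2 * p^4) = c 1"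
      using assms(1) by (simp add: c_def moebius_primitive_real_def field_simps power2_eq_square power4_eq_xxxx)
    also have "\<dots> < c (1 - min d 1 / 2)" using d \<open>0 < d\<close> by simp
    finally show "(1 / p^2) * (1 + lam * p^2 + lam^2 * p^4)
      < ((1 + lam * p * moebius_primitive_real (1 - min d 1 / 2) p) / p)\<^sup>2 - lam * (1 - min d 1 / 2)"
      by (simp add: c_def)
  qed
qed

lemma moebius_perturbation_in_U_m:
  fixes a p lam :: real
  assumes a: "0 < a" "a < 1" and p: "0 < p" "p < 1" and lam: "0 < lam" "lam < 1 / 2"
  defines "B \<equiv> (1 + lam * p * moebius_primitive_real a p) / p"
  shows "\<exists>f \<in> U_m lam p. taylor_coeff f 3 = of_real (B\<^sup>2 - lam * a)"
proof -
  have "a * p \<le> moebius_primitive_real a p"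
    using a p by (intro moebius_primitive_real_ge) auto
  then have "0 \<le> lam * p * moebius_primitive_real a p"
    using mult_pos_pos[OF a(1) p(1)] p(1) lam(1) by simp
  then have "1 / p \<le> B"
    using p(1) unfolding B_def by (intro divide_right_mono) auto
  moreover have "1 < 1 / p" using p by simp
  ultimately have large: "2 * lam < cmod (- of_real B)" using lam(2) by simp
  have "moebius_primitive a p = of_real (moebius_primitive_real a p)"
    using a p by (intro moebius_primitive_of_real) (simp add: add_pos_pos)
  then have root: "1 + (- of_real B) * of_real p + of_real (lam * p) * moebius_primitive a p = 0"
    using p(1) by (simp add: B_def field_simps)
  have a': "a \<noteq> 0" "\<bar>a\<bar> < 1" using a by auto
  note f = id_divide_perturbation_in_U_m[OF moebius_primitive_holomorphic[OF a']
      moebius_primitive_zero norm_deriv_moebius_primitive_le_1[OF a'] p lam(1) root large]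
  show ?thesis
    using f by (auto simp: deriv_moebius_primitive_0[OF a'])
qed

theorem mainTheorem7:
  fixes p0 p lam :: real
  assumes "0 < p0" "p0 < 1" "4 * ln (1 + p0) - 3 * p0 = 0"
    and "p0 < p" "p < 1"
    and "0 < lam"
    and "lam < ((4 / p) * ln (1 + p) - 3) / (- 4 * p * ln (1 + p) + 2 * p^2)"
  shows "\<exists>f \<in> U_m lam p. cmod (taylor_coeff f 3) > (1 / p^2) * (1 + lam * p^2 + lam^2 * p^4)"
proof -
  \<comment> \<open>The hypotheses on p0 only give 0 < p: the bound on lam alone forces 4 ln (1 + p) < 3 p.\<close>
  have "0 < p" using assms(1,4) by linarith
  note lam_bounds = admissible_lambda_bounds[OF \<open>0 < p\<close> assms(5-7)]
  obtain a where a: "0 < a" "a < 1"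
    and gain: "(1 / p^2) * (1 + lam * p^2 + lam^2 * p^4)
                 < ((1 + lam * p * moebius_primitive_real a p) / p)\<^sup>2 - lam * a"
    using third_coefficient_gain[OF \<open>0 < p\<close> assms(6) lam_bounds(1)] by blast
  obtain f where f: "f \<in> U_m lam p"
    and coeff: "taylor_coeff f 3 = of_real (((1 + lam * p * moebius_primitive_real a p) / p)\<^sup>2 - lam * a)"
    using moebius_perturbation_in_U_m[OF a \<open>0 < p\<close> assms(5,6) lam_bounds(2)] by blast
  have "0 \<le> (1 / p^2) * (1 + lam * p^2 + lam^2 * p^4)" using assms(6) by simp
  then have "cmod (taylor_coeff f 3) > (1 / p^2) * (1 + lam * p^2 + lam^2 * p^4)"
    using gain unfolding coeff norm_of_real by linarith
  with f show ?thesis by blast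
qed

end
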